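(* Let $a>0$, $b>0$, $T>0$, let $f$ be a $1$-periodic, twice continuously differentiable function with $\kappa=\inf_{0\le t\le1}f(t)>0$, and let $\vartheta>0$. For $\varepsilon>0$ let $\gamma(\vartheta,\cdot)$ be the solution on $[0,T]$ of the Riccati equation $$\frac{\partial\gamma(\vartheta,t)}{\partial t}=-2a\gamma(\vartheta,t)-\frac{\gamma(\vartheta,t)^2f(\vartheta t)^2}{\varepsilon^2}+b^2,\qquad\gamma(\vartheta,0)=0.$$ Then for any $t_0\in(0,T]$, $$\sup_{t_0\le t\le T}\Big|\gamma(\vartheta,t)-\frac{b\,\varepsilon}{f(\vartheta t)}\Big|=O(\varepsilon^2)\quad\text{as }\varepsilon\to0.$$
   Context: $\gamma(\vartheta,t)$ is the variance of the Kalman–Bucy filtering error for the signal $Y_t$ (an Ornstein–Uhlenbeck process $dY_t=-aY_tdt+b\,dV_t$) observed through $dX_t=f(\vartheta t)Y_tdt+\varepsilon dW_t$. *)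

theory Defs
  imports "HOL-Analysis.Analysis" "HOL-Library.Landau_Symbols"
begin

end

(*
  Write g(t) = f(\<theta> t) \<ge> \<kappa>. The quasi-static value b \<epsilon> / g(t) nearly annihilates the right-hand
  side of the Riccati equation, and two explicit barriers bracket the solution: for a constant P
  depending on a, b, \<kappa> and a bound on g', the function b \<epsilon> (1 + P \<epsilon>) / g is a strict
  supersolution and b \<epsilon> (1 - P \<epsilon>) (1 - exp (- b \<kappa> t / (2 \<epsilon>))) / g a strict subsolution.
  The initial value 0 lies between them at t = 0, so a first-touching argument keeps the solution
  between them on [0, T]. Their distance to b \<epsilon> / g is O(\<epsilon>^2) as soon as the boundary
  layer exp (- b \<kappa> t / (2 \<epsilon>)) is below \<epsilon>, which holds uniformly for t \<ge> t0 and small \<epsilon>.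
*)

theory Submission
  imports Defs "HOL-Library.Periodic_Fun"
begin

lemma nonpos_if_deriv_neg_at_zeros:
  fixes h h' :: "real \<Rightarrow> real"
  assumes deriv: "\<And>t. t \<in> {a..b} \<Longrightarrow> (h has_real_derivative h' t) (at t within {a..b})"
    and start: "h a \<le> 0"
    and neg: "\<And>t. t \<in> {a..b} \<Longrightarrow> h t = 0 \<Longrightarrow> h' t < 0"
    and t: "t \<in> {a..b}"
  shows "h t \<le> 0"
proof (rule ccontr)
  assume "\<not> h t \<le> 0"
  then have pos: "h t > 0" by simp
  have cont: "continuous_on {a..b} h"
    using deriv by (meson DERIV_continuous continuous_on_eq_continuous_within)
  then have cont_t: "continuous_on {a..t} h"
    by (rule continuous_on_subset) (use t in auto)
  \<comment> \<open>Take the last zero z of h before t: h is negative just after z, so it vanishes again later.\<close>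
  define Z where "Z = {x \<in> {a..t}. h x = 0}"
  define z where "z = Sup Z"
  have "closed Z" unfolding Z_def
    by (rule continuous_closed_preimage_constant[OF cont_t]) simp
  moreover have "Z \<noteq> {}"
    using IVT'[of h a 0 t, OF start] pos t cont_t unfolding Z_def by auto
  moreover have bdd: "bdd_above Z" unfolding Z_def by (auto intro: bdd_aboveI[where M = t])
  ultimately have "z \<in> Z" unfolding z_def by (rule closed_contains_Sup[rotated 2])
  then have z: "z \<in> {a..t}" "h z = 0" unfolding Z_def by auto
  with pos have "z < t" by (cases "z = t") auto
  from z t have zab: "z \<in> {a..b}" by auto
  obtain d where "d > 0"
    and decr: "\<And>k. k > 0 \<Longrightarrow> z + k \<in> {a..b} \<Longrightarrow> k < d \<Longrightarrow> h (z + k) < h z"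
    using has_real_derivative_neg_dec_right[OF deriv[OF zab] neg[OF zab z(2)]] by blast
  define k where "k = min (d/2) ((t - z)/2)"
  have k: "0 < k" "k < d" "z + k \<le> t"
    unfolding k_def using \<open>d > 0\<close> \<open>z < t\<close> by (auto simp: min_def field_simps)
  have "h (z + k) < 0" using decr k z t by auto
  moreover have "continuous_on {z + k..t} h"
    using cont by (rule continuous_on_subset) (use k z t in auto)
  ultimately obtain z' where z': "z + k \<le> z'" "z' \<le> t" "h z' = 0"
    using IVT'[of h "z + k" 0 t] pos k by auto
  then have "z' \<in> Z" unfolding Z_def using z k by auto
  then have "z' \<le> z" unfolding z_def using bdd by (rule cSup_upper)
  with z' k show False by auto
qed

lemma comparison_principle_strict:
  fixes x y x' y' :: "real \<Rightarrow> real"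
  assumes "\<And>t. t \<in> {a..b} \<Longrightarrow> (x has_real_derivative x' t) (at t within {a..b})"
    and "\<And>t. t \<in> {a..b} \<Longrightarrow> (y has_real_derivative y' t) (at t within {a..b})"
    and "x a \<le> y a"
    and "\<And>t. t \<in> {a..b} \<Longrightarrow> x t = y t \<Longrightarrow> x' t < y' t"
    and "t \<in> {a..b}"
  shows "x t \<le> y t"
  using nonpos_if_deriv_neg_at_zeros[of a b "\<lambda>t. x t - y t" "\<lambda>t. x' t - y' t" t] assms
  by (auto intro: DERIV_diff)

lemma exp_neg_div_le:
  fixes c \<epsilon> :: real
  assumes "c > 0" "\<epsilon> > 0" "\<epsilon> \<le> c\<^sup>2/4"
  shows "exp (- (c/\<epsilon>)) \<le> \<epsilon>"
proof -
  define x where "x = c/\<epsilon>"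
  have x: "x > 0" unfolding x_def using assms by simp
  have "x/2 \<le> exp (x/2)" using exp_ge_add_one_self[of "x/2"] by linarith
  then have "(x/2)\<^sup>2 \<le> (exp (x/2))\<^sup>2" by (rule power_mono) (use x in simp)
  also have "(exp (x/2))\<^sup>2 = exp x" by (simp add: power2_eq_square flip: exp_add)
  finally have "x\<^sup>2/4 \<le> exp x" by (simp add: power_divide)
  then have "exp (-x) \<le> 1 / (x\<^sup>2/4)"
    using x by (simp add: exp_minus divide_simps)
  also have "\<dots> = \<epsilon> * (4*\<epsilon>/c\<^sup>2)"
    unfolding x_def using assms by (simp add: field_simps power2_eq_square)
  also have "\<dots> \<le> \<epsilon>" using assms by (simp add: field_simps)
  finally show ?thesis unfolding x_def .
qed

lemma periodic_ge_INF_unit_interval: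
  fixes f :: "real \<Rightarrow> real"
  assumes periodic: "\<And>t. f (t + 1) = f t" and cont: "continuous_on {0..1} f"
  shows "(INF t\<in>{0..1}. f t) \<le> f x"
proof -
  interpret periodic_fun_simple' f by standard (rule periodic)
  have "bdd_below (f ` {0..1})"
    by (intro bounded_imp_bdd_below compact_imp_bounded compact_continuous_image cont) simp
  moreover have "x - of_int \<lfloor>x\<rfloor> \<in> {0..1}"
    using real_of_int_floor_add_one_gt[of x] of_int_floor_le[of x]
    unfolding atLeastAtMost_iff by linarith
  ultimately have "(INF t\<in>{0..1}. f t) \<le> f (x - of_int \<lfloor>x\<rfloor>)" by (rule cINF_lower)
  also have "\<dots> = f x" using plus_of_int[of "x - of_int \<lfloor>x\<rfloor>" "\<lfloor>x\<rfloor>"] by simp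
  finally show ?thesis .
qed

lemma SUP_abs_in_bigo:
  fixes h :: "'a \<Rightarrow> 'b \<Rightarrow> real" and g :: "'a \<Rightarrow> real"
  assumes "S \<noteq> {}" and "eventually (\<lambda>x. \<forall>s\<in>S. \<bar>h x s\<bar> \<le> C * \<bar>g x\<bar>) F"
  shows "(\<lambda>x. SUP s\<in>S. \<bar>h x s\<bar>) \<in> O[F](g)"
proof (rule bigoI)
  show "\<forall>\<^sub>F x in F. norm (SUP s\<in>S. \<bar>h x s\<bar>) \<le> C * norm (g x)"
    using assms(2)
  proof eventually_elim
    case (elim x)
    obtain s where "s \<in> S" using assms(1) by blast
    have "bdd_above ((\<lambda>s. \<bar>h x s\<bar>) ` S)" using elim by (intro bdd_aboveI2) auto
    then have "0 \<le> (SUP s\<in>S. \<bar>h x s\<bar>)"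
      using cSUP_upper[OF \<open>s \<in> S\<close>] abs_ge_zero order_trans by metis
    moreover have "(SUP s\<in>S. \<bar>h x s\<bar>) \<le> C * \<bar>g x\<bar>"
      using elim by (intro cSUP_least assms(1)) auto
    ultimately show ?case by simp
  qed
qed

definition riccati_rhs :: "real \<Rightarrow> real \<Rightarrow> real \<Rightarrow> real \<Rightarrow> real \<Rightarrow> real" where
  "riccati_rhs a b \<epsilon> g y = - 2 * a * y - y\<^sup>2 * g\<^sup>2 / \<epsilon>\<^sup>2 + b\<^sup>2"

lemma riccati_rhs_less_at_upper_barrier:
  fixes a b \<epsilon> \<kappa> L P g g' :: real
  assumes "a > 0" "b > 0" "\<epsilon> > 0" "\<kappa> > 0" "\<kappa> \<le> g" "\<bar>g'\<bar> \<le> L" "L/\<kappa>\<^sup>2 \<le> b*P" "0 \<le> P"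
  shows "riccati_rhs a b \<epsilon> g (b*\<epsilon>*(1 + P*\<epsilon>)/g) < -(b*\<epsilon>*(1 + P*\<epsilon>)) * (g'/g\<^sup>2)"
proof -
  define s where "s = 1 + P*\<epsilon>"
  have g: "g > 0" using assms by linarith
  have s: "1 \<le> s" unfolding s_def using assms by simp
  have "riccati_rhs a b \<epsilon> g (b*\<epsilon> * s/g) = - 2*a*(b*\<epsilon> * s/g) - (b*\<epsilon> * s)*(b*P) - b\<^sup>2*P*\<epsilon>"
    unfolding riccati_rhs_def s_def using g assms by (simp add: field_simps power2_eq_square)
  also have "\<dots> < -(b*\<epsilon> * s)*(b*P)"
  proof -
    have "0 < 2*a*(b*\<epsilon> * s/g)" "0 \<le> b\<^sup>2*P*\<epsilon>" using assms g s by auto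
    then show ?thesis by (simp add: algebra_simps)
  qed
  also have "\<dots> \<le> -(b*\<epsilon> * s)*(L/\<kappa>\<^sup>2)"
    using assms s by (intro mult_left_mono_neg) auto
  also have "\<dots> \<le> -(b*\<epsilon> * s)*(g'/g\<^sup>2)"
  proof -
    have "g'/g\<^sup>2 \<le> L/g\<^sup>2" using assms by (intro divide_right_mono) auto
    also have "\<dots> \<le> L/\<kappa>\<^sup>2" using assms by (intro divide_left_mono power_mono) auto
    finally show ?thesis using assms s by (intro mult_left_mono_neg) auto
  qed
  finally show ?thesis unfolding s_def .
qed

lemma riccati_rhs_greater_at_lower_barrier:
  fixes a b \<epsilon> \<kappa> L P E g g' :: real
  assumes "a > 0" "b > 0" "\<epsilon> > 0" "\<kappa> > 0" "\<kappa> \<le> g" "\<bar>g'\<bar> \<le> L"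
    and "2*a/\<kappa> + L/\<kappa>\<^sup>2 + b \<le> b*P" "P*\<epsilon> \<le> 1" "0 < E" "E \<le> 1"
  shows "b*(1 - P*\<epsilon>)*(b*\<kappa>/2)*E/g - b*\<epsilon>*(1 - P*\<epsilon>)*(1 - E)*(g'/g\<^sup>2)
    < riccati_rhs a b \<epsilon> g (b*\<epsilon>*(1 - P*\<epsilon>)*(1 - E)/g)"
proof -
  define Q where "Q = 1 - P*\<epsilon>"
  define m where "m = Q*(1 - E)"
  define \<eta> where "\<eta> = P*\<epsilon> + Q*E"
  have g: "g > 0" using assms by linarith
  have L: "0 \<le> L" using assms by linarith
  have "0 < 2*a/\<kappa>" "0 \<le> L/\<kappa>\<^sup>2" using assms L by auto
  then have "0 < b*P" using assms by linarith
  then have P: "0 \<le> P" using assms by (simp add: zero_less_mult_iff)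
  have Q: "0 \<le> Q" "Q \<le> 1" unfolding Q_def using assms P by auto
  have m: "0 \<le> m" "m \<le> 1" unfolding m_def using Q assms by (auto intro: mult_le_one)
  have \<eta>: "m = 1 - \<eta>" "Q*E \<ge> 0" unfolding m_def \<eta>_def Q_def using Q assms
    by (auto simp: algebra_simps)
  have "riccati_rhs a b \<epsilon> g (b*\<epsilon>*m/g) = -2*a*(b*\<epsilon>*m/g) + b\<^sup>2*\<eta>*(2 - \<eta>)"
    unfolding riccati_rhs_def \<eta> using g assms by (simp add: field_simps power2_eq_square)
  moreover have "b\<^sup>2*\<eta> \<le> b\<^sup>2*\<eta>*(2 - \<eta>)"
  proof -
    have "0 \<le> b\<^sup>2*(\<eta>*(1 - \<eta>))" using \<eta> m by simp
    then show ?thesis by (simp add: algebra_simps)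
  qed
  moreover have "2*a*(b*\<epsilon>*m/g) \<le> 2*a*b*\<epsilon>/\<kappa>"
  proof -
    have "b*\<epsilon>*m/g \<le> b*\<epsilon>/g" using m assms g by (intro divide_right_mono) auto
    also have "\<dots> \<le> b*\<epsilon>/\<kappa>" using assms by (intro divide_left_mono) auto
    finally have "2*a*(b*\<epsilon>*m/g) \<le> 2*a*(b*\<epsilon>/\<kappa>)"
      using assms by (intro mult_left_mono) auto
    then show ?thesis by simp
  qed
  moreover have "b*Q*(b*\<kappa>/2)*E/g \<le> b\<^sup>2*(Q*E)/2"
  proof -
    have "b*Q*(b*\<kappa>/2)*E/g \<le> b*Q*(b*\<kappa>/2)*E/\<kappa>"
      using assms Q by (intro divide_left_mono) auto
    also have "\<dots> = b\<^sup>2*(Q*E)/2" using assms by (simp add: field_simps power2_eq_square)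
    finally show ?thesis .
  qed
  moreover have "-(b*\<epsilon>*m*(g'/g\<^sup>2)) \<le> b*\<epsilon>*(L/\<kappa>\<^sup>2)"
  proof -
    have "-g'/g\<^sup>2 \<le> L/g\<^sup>2" using assms by (intro divide_right_mono) auto
    also have "\<dots> \<le> L/\<kappa>\<^sup>2" using assms L by (intro divide_left_mono power_mono) auto
    finally have "b*\<epsilon>*m*(-g'/g\<^sup>2) \<le> b*\<epsilon>*m*(L/\<kappa>\<^sup>2)"
      using assms m by (intro mult_left_mono) auto
    also have "\<dots> \<le> b*\<epsilon>*(L/\<kappa>\<^sup>2)" using assms m L by (intro mult_right_mono mult_left_le) auto
    finally show ?thesis by simp
  qed
  moreover have "2*a*b*\<epsilon>/\<kappa> + b*\<epsilon>*(L/\<kappa>\<^sup>2) + b\<^sup>2*\<epsilon> \<le> b\<^sup>2*(P*\<epsilon>)"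
  proof -
    have "(b*\<epsilon>)*(2*a/\<kappa> + L/\<kappa>\<^sup>2 + b) \<le> (b*\<epsilon>)*(b*P)"
      using assms by (intro mult_left_mono) auto
    then show ?thesis by (simp add: algebra_simps power2_eq_square)
  qed
  moreover have "b\<^sup>2*\<eta> = b\<^sup>2*(P*\<epsilon>) + b\<^sup>2*(Q*E)" unfolding \<eta>_def by (simp add: algebra_simps)
  moreover have "0 < b\<^sup>2*\<epsilon>" "0 \<le> b\<^sup>2*(Q*E)" using assms \<eta> by auto
  ultimately have "b*Q*(b*\<kappa>/2)*E/g - b*\<epsilon>*m*(g'/g\<^sup>2) < riccati_rhs a b \<epsilon> g (b*\<epsilon>*m/g)"
    by linarith
  then show ?thesis unfolding m_def Q_def by (simp add: mult.assoc)
qed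

lemma riccati_solution_le_upper_barrier:
  fixes a b \<epsilon> \<kappa> L P T t :: real and g g' y :: "real \<Rightarrow> real"
  assumes "a > 0" "b > 0" "\<epsilon> > 0" "\<kappa> > 0"
    and g_deriv: "\<And>s. (g has_real_derivative g' s) (at s)"
    and g_ge: "\<And>s. \<kappa> \<le> g s"
    and g'_bound: "\<And>s. s \<in> {0..T} \<Longrightarrow> \<bar>g' s\<bar> \<le> L"
    and y_init: "y 0 = 0"
    and y_deriv: "\<And>s. s \<in> {0..T} \<Longrightarrow>
      (y has_real_derivative riccati_rhs a b \<epsilon> (g s) (y s)) (at s within {0..T})"
    and P: "L/\<kappa>\<^sup>2 \<le> b*P" "0 \<le> P"
    and t: "t \<in> {0..T}"
  shows "y t \<le> b*\<epsilon>*(1 + P*\<epsilon>)/g t"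
proof (rule comparison_principle_strict[OF y_deriv _ _ _ t,
      where y' = "\<lambda>s. -(b*\<epsilon>*(1 + P*\<epsilon>)) * (g' s/(g s)\<^sup>2)"])
  have g_pos: "g s > 0" for s using g_ge[of s] \<open>\<kappa> > 0\<close> by linarith
  fix s assume s: "s \<in> {0..T}"
  have "((\<lambda>s. b*\<epsilon>*(1 + P*\<epsilon>)/g s) has_real_derivative
      -(b*\<epsilon>*(1 + P*\<epsilon>)) * (g' s/(g s)\<^sup>2)) (at s)"
    using g_pos[of s] by (auto intro!: derivative_eq_intros g_deriv simp: power2_eq_square)
  then show "((\<lambda>s. b*\<epsilon>*(1 + P*\<epsilon>)/g s) has_real_derivative
      -(b*\<epsilon>*(1 + P*\<epsilon>)) * (g' s/(g s)\<^sup>2)) (at s within {0..T})"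
    by (rule has_field_derivative_at_within)
  show "y s = b*\<epsilon>*(1 + P*\<epsilon>)/g s \<Longrightarrow>
      riccati_rhs a b \<epsilon> (g s) (y s) < -(b*\<epsilon>*(1 + P*\<epsilon>)) * (g' s/(g s)\<^sup>2)"
    using riccati_rhs_less_at_upper_barrier[OF assms(1-4) g_ge g'_bound[OF s] P] by simp
next
  have "0 < g 0" using g_ge[of 0] \<open>\<kappa> > 0\<close> by linarith
  then show "y 0 \<le> b*\<epsilon>*(1 + P*\<epsilon>)/g 0"
    using y_init assms P by simp
qed

lemma riccati_solution_ge_lower_barrier:
  fixes a b \<epsilon> \<kappa> L P T t :: real and g g' y :: "real \<Rightarrow> real"
  assumes "a > 0" "b > 0" "\<epsilon> > 0" "\<kappa> > 0"
    and g_deriv: "\<And>s. (g has_real_derivative g' s) (at s)"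
    and g_ge: "\<And>s. \<kappa> \<le> g s"
    and g'_bound: "\<And>s. s \<in> {0..T} \<Longrightarrow> \<bar>g' s\<bar> \<le> L"
    and y_init: "y 0 = 0"
    and y_deriv: "\<And>s. s \<in> {0..T} \<Longrightarrow>
      (y has_real_derivative riccati_rhs a b \<epsilon> (g s) (y s)) (at s within {0..T})"
    and P: "2*a/\<kappa> + L/\<kappa>\<^sup>2 + b \<le> b*P" "P*\<epsilon> \<le> 1"
    and t: "t \<in> {0..T}"
  shows "b*\<epsilon>*(1 - P*\<epsilon>)*(1 - exp (- (b*\<kappa>/2 * t/\<epsilon>)))/g t \<le> y t"
proof -
  define E where "E s = exp (- (b*\<kappa>/2 * s/\<epsilon>))" for s
  define w where "w s = b*\<epsilon>*(1 - P*\<epsilon>)*(1 - E s)/g s" for s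
  define w' where "w' s = b*(1 - P*\<epsilon>)*(b*\<kappa>/2)*E s/g s
    - b*\<epsilon>*(1 - P*\<epsilon>)*(1 - E s)*(g' s/(g s)\<^sup>2)" for s
  have g_pos: "g s > 0" for s using g_ge[of s] \<open>\<kappa> > 0\<close> by linarith
  have "w t \<le> y t"
  proof (rule comparison_principle_strict[OF _ y_deriv _ _ t, where x' = w'])
    fix s assume s: "s \<in> {0..T}"
    have "(w has_real_derivative w' s) (at s)"
      unfolding w_def w'_def E_def using g_pos[of s] \<open>\<epsilon> > 0\<close>
      by (auto intro!: derivative_eq_intros g_deriv simp: power2_eq_square field_simps)
    then show "(w has_real_derivative w' s) (at s within {0..T})"
      by (rule has_field_derivative_at_within)
    have "0 < E s" "E s \<le> 1" unfolding E_def using s assms by auto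
    then have "w' s < riccati_rhs a b \<epsilon> (g s) (w s)"
      using riccati_rhs_greater_at_lower_barrier[OF assms(1-4) g_ge g'_bound[OF s] P]
      unfolding w_def w'_def by blast
    then show "w s = y s \<Longrightarrow> w' s < riccati_rhs a b \<epsilon> (g s) (y s)" by simp
  next
    show "w 0 \<le> y 0" using y_init unfolding w_def E_def by simp
  qed
  then show ?thesis unfolding w_def E_def .
qed

lemma riccati_solution_near_quasistatic:
  fixes a b \<epsilon> \<kappa> L P T t :: real and g g' y :: "real \<Rightarrow> real"
  assumes "a > 0" "b > 0" "\<epsilon> > 0" "\<kappa> > 0"
    and g_deriv: "\<And>s. (g has_real_derivative g' s) (at s)"
    and g_ge: "\<And>s. \<kappa> \<le> g s"
    and g'_bound: "\<And>s. s \<in> {0..T} \<Longrightarrow> \<bar>g' s\<bar> \<le> L"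
    and y_init: "y 0 = 0"
    and y_deriv: "\<And>s. s \<in> {0..T} \<Longrightarrow>
      (y has_real_derivative riccati_rhs a b \<epsilon> (g s) (y s)) (at s within {0..T})"
    and P: "2*a/\<kappa> + L/\<kappa>\<^sup>2 + b \<le> b*P" "P*\<epsilon> \<le> 1"
    and t: "t \<in> {0..T}"
  shows "\<bar>y t - b*\<epsilon>/g t\<bar> \<le> b*\<epsilon>*(P*\<epsilon> + exp (- (b*\<kappa>/2 * t/\<epsilon>)))/\<kappa>"
proof -
  define E where "E = exp (- (b*\<kappa>/2 * t/\<epsilon>))"
  have g: "\<kappa> \<le> g t" "0 < g t" using g_ge[of t] \<open>\<kappa> > 0\<close> by auto
  have "0 \<le> L" using g'_bound[OF t] by linarith
  then have "0 < 2*a/\<kappa>" "0 \<le> L/\<kappa>\<^sup>2" using assms by auto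
  then have "L/\<kappa>\<^sup>2 \<le> b*P \<and> 0 < b*P" using P(1) \<open>b > 0\<close> by linarith
  then have P_upper: "L/\<kappa>\<^sup>2 \<le> b*P" "0 \<le> P" using \<open>b > 0\<close> by (auto simp: zero_less_mult_iff)
  have E: "0 < E" "E \<le> 1" unfolding E_def using t assms by auto
  have "y t \<le> b*\<epsilon>*(1 + P*\<epsilon>)/g t"
    by (rule riccati_solution_le_upper_barrier[OF assms(1-4) g_deriv g_ge g'_bound y_init y_deriv
          P_upper t])
  then have "y t - b*\<epsilon>/g t \<le> b*\<epsilon>*(1 + P*\<epsilon>)/g t - b*\<epsilon>/g t" by simp
  also have "\<dots> = b*\<epsilon>*(P*\<epsilon>)/g t" using g by (simp add: field_simps)
  also have "\<dots> \<le> b*\<epsilon>*(P*\<epsilon> + (1 - P*\<epsilon>)*E)/g t"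
    using assms E g by (intro divide_right_mono mult_left_mono) auto
  finally have upper: "y t - b*\<epsilon>/g t \<le> b*\<epsilon>*(P*\<epsilon> + (1 - P*\<epsilon>)*E)/g t" .
  have "b*\<epsilon>*(1 - P*\<epsilon>)*(1 - E)/g t \<le> y t"
    unfolding E_def by (rule riccati_solution_ge_lower_barrier[OF assms(1-4) g_deriv g_ge g'_bound
          y_init y_deriv P t])
  then have "b*\<epsilon>/g t - y t \<le> b*\<epsilon>/g t - b*\<epsilon>*(1 - P*\<epsilon>)*(1 - E)/g t" by simp
  also have "\<dots> = b*\<epsilon>*(P*\<epsilon> + (1 - P*\<epsilon>)*E)/g t" using g by (simp add: field_simps)
  finally have lower: "b*\<epsilon>/g t - y t \<le> b*\<epsilon>*(P*\<epsilon> + (1 - P*\<epsilon>)*E)/g t" .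
  have "b*\<epsilon>*(P*\<epsilon> + (1 - P*\<epsilon>)*E)/g t \<le> b*\<epsilon>*(P*\<epsilon> + E)/g t"
    using assms E P_upper g by (intro divide_right_mono mult_left_mono) (auto simp: mult_left_le_one_le)
  also have "\<dots> \<le> b*\<epsilon>*(P*\<epsilon> + E)/\<kappa>"
    using assms E P_upper g by (intro divide_left_mono) auto
  finally show ?thesis using upper lower unfolding E_def by linarith
qed

lemma riccati_quasistatic_bigo:
  fixes a b \<kappa> L T t0 :: real and g g' :: "real \<Rightarrow> real" and y :: "real \<Rightarrow> real \<Rightarrow> real"
  assumes "a > 0" "b > 0" "\<kappa> > 0" "0 < t0" "t0 \<le> T"
    and g_deriv: "\<And>s. (g has_real_derivative g' s) (at s)"
    and g_ge: "\<And>s. \<kappa> \<le> g s"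
    and g'_bound: "\<And>s. s \<in> {0..T} \<Longrightarrow> \<bar>g' s\<bar> \<le> L"
    and y_init: "\<And>\<epsilon>. \<epsilon> > 0 \<Longrightarrow> y \<epsilon> 0 = 0"
    and y_deriv: "\<And>\<epsilon> s. \<epsilon> > 0 \<Longrightarrow> s \<in> {0..T} \<Longrightarrow>
      (y \<epsilon> has_real_derivative riccati_rhs a b \<epsilon> (g s) (y \<epsilon> s)) (at s within {0..T})"
  shows "(\<lambda>\<epsilon>. SUP t\<in>{t0..T}. \<bar>y \<epsilon> t - b*\<epsilon>/g t\<bar>) \<in> O[at_right 0](\<lambda>\<epsilon>. \<epsilon>\<^sup>2)"
proof -
  define P where "P = (2*a/\<kappa> + L/\<kappa>\<^sup>2)/b + 1"
  define c where "c = b*\<kappa>/2 * t0"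
  have P: "2*a/\<kappa> + L/\<kappa>\<^sup>2 + b \<le> b*P" unfolding P_def using \<open>b > 0\<close> by (simp add: field_simps)
  have "c > 0" unfolding c_def using assms by simp
  have bound: "\<bar>y \<epsilon> t - b*\<epsilon>/g t\<bar> \<le> b*(P + 1)/\<kappa> * \<bar>\<epsilon>\<^sup>2\<bar>"
    if "0 < \<epsilon>" "P*\<epsilon> \<le> 1" "\<epsilon> \<le> c\<^sup>2/4" "t \<in> {t0..T}" for \<epsilon> t
  proof -
    have "t \<in> {0..T}" using that \<open>0 < t0\<close> by auto
    with that have "\<bar>y \<epsilon> t - b*\<epsilon>/g t\<bar> \<le> b*\<epsilon>*(P*\<epsilon> + exp (- (b*\<kappa>/2 * t/\<epsilon>)))/\<kappa>"
      using riccati_solution_near_quasistatic[OF \<open>a > 0\<close> \<open>b > 0\<close> _ \<open>\<kappa> > 0\<close> g_deriv g_ge g'_bound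
          y_init y_deriv P] by blast
    also have "exp (- (b*\<kappa>/2 * t/\<epsilon>)) \<le> exp (- (c/\<epsilon>))"
      unfolding c_def using that assms by (auto simp: divide_right_mono mult_left_mono)
    also have "\<dots> \<le> \<epsilon>" using exp_neg_div_le \<open>c > 0\<close> that by blast
    finally show ?thesis using that assms by (auto simp: field_simps power2_eq_square)
  qed
  have P_lim: "((\<lambda>\<epsilon>. P * \<epsilon>) \<longlongrightarrow> 0) (at_right 0)" by (intro tendsto_eq_intros) auto
  have "0 < c\<^sup>2/4" using \<open>c > 0\<close> by simp
  from order_tendstoD(2)[OF P_lim zero_less_one] eventually_at_right_less[of 0]
    order_tendstoD(2)[OF tendsto_ident_at this]
  have "\<forall>\<^sub>F \<epsilon> in at_right 0. \<forall>t\<in>{t0..T}. \<bar>y \<epsilon> t - b*\<epsilon>/g t\<bar> \<le> b*(P + 1)/\<kappa> * \<bar>\<epsilon>\<^sup>2\<bar>"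
    by eventually_elim (intro ballI bound, auto)
  from SUP_abs_in_bigo[OF _ this] show ?thesis using \<open>t0 \<le> T\<close> by simp
qed

theorem lemma1:
  fixes a b T \<theta> t0 :: real
    and f f' f'' :: "real \<Rightarrow> real"
    and \<gamma> :: "real \<Rightarrow> real \<Rightarrow> real"
  assumes "a > 0" "b > 0" "T > 0" "\<theta> > 0"
    and periodic: "\<And>t. f (t + 1) = f t"
    and f_deriv: "\<And>t. (f has_real_derivative f' t) (at t)"
    and f'_deriv: "\<And>t. (f' has_real_derivative f'' t) (at t)"
    and f''_cont: "continuous_on UNIV f''"
    and kappa_pos: "(INF t\<in>{0..1}. f t) > 0"
    and init: "\<And>\<epsilon>. \<epsilon> > 0 \<Longrightarrow> \<gamma> \<epsilon> 0 = 0"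
    and riccati: "\<And>\<epsilon> t. \<epsilon> > 0 \<Longrightarrow> t \<in> {0..T} \<Longrightarrow>
       (\<gamma> \<epsilon> has_real_derivative
          (- 2 * a * \<gamma> \<epsilon> t - (\<gamma> \<epsilon> t)\<^sup>2 * (f (\<theta> * t))\<^sup>2 / \<epsilon>\<^sup>2 + b\<^sup>2))
        (at t within {0..T})"
    and "0 < t0" "t0 \<le> T"
  shows "(\<lambda>\<epsilon>. SUP t\<in>{t0..T}. \<bar>\<gamma> \<epsilon> t - b * \<epsilon> / f (\<theta> * t)\<bar>)
           \<in> O[at_right 0](\<lambda>\<epsilon>. \<epsilon>\<^sup>2)"
proof -
  define \<kappa> where "\<kappa> = (INF t\<in>{0..1}. f t)"
  have f_ge: "\<kappa> \<le> f x" for x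
    unfolding \<kappa>_def using f_deriv
    by (intro periodic_ge_INF_unit_interval periodic continuous_at_imp_continuous_on)
       (auto intro: DERIV_isCont)
  obtain B where B: "\<And>x. x \<in> {0..\<theta>*T} \<Longrightarrow> \<bar>f' x\<bar> \<le> B"
  proof -
    have "continuous_on {0..\<theta>*T} f'"
      using f'_deriv by (intro continuous_at_imp_continuous_on) (auto intro: DERIV_isCont)
    then have "bounded (f' ` {0..\<theta>*T})" by (intro compact_imp_bounded compact_continuous_image) auto
    then show ?thesis using that unfolding bounded_real by (auto simp del: atLeastAtMost_iff)
  qed
  have g_deriv: "((\<lambda>s. f (\<theta> * s)) has_real_derivative f' (\<theta> * s) * \<theta>) (at s)" for s
    using DERIV_chain2[OF f_deriv DERIV_cmult_Id] .
  have g'_bound: "\<bar>f' (\<theta> * s) * \<theta>\<bar> \<le> B * \<theta>" if "s \<in> {0..T}" for s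
    using B[of "\<theta> * s"] that assms by (auto simp: abs_mult mult_left_mono)
  have riccati': "(\<gamma> \<epsilon> has_real_derivative riccati_rhs a b \<epsilon> (f (\<theta> * s)) (\<gamma> \<epsilon> s))
      (at s within {0..T})" if "0 < \<epsilon>" "s \<in> {0..T}" for \<epsilon> s
    unfolding riccati_rhs_def using that by (rule riccati)
  show ?thesis
    using riccati_quasistatic_bigo[OF \<open>a > 0\<close> \<open>b > 0\<close> _ \<open>0 < t0\<close> \<open>t0 \<le> T\<close> g_deriv f_ge g'_bound
        init riccati'] kappa_pos unfolding \<kappa>_def by blast
qed

end
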